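(* Let $X$ be a Banach space, $(A_m)_{m\in\mathbb{Z}}$ a sequence of invertible bounded linear operators on $X$ with $\sup_m\lVert A_m\rVert<\infty$ admitting an exponential dichotomy, and $c>0$ a constant as described in the context (with $B=l^\infty$). Let $f_n\colon X\to X$, $n\in\mathbb{Z}$, be differentiable maps with $\lVert d_xf_n\rVert\le c$ for all $x,n$, $\sup_n\sup_x\lVert f_n(x)\rVert<\infty$, and $\lVert d_xf_n-d_yf_n\rVert\le D\lVert x-y\rVert^r$ for some $D,r>0$ and all $x,y,n$. Put $F_n=A_n+f_n$ and assume there is $N\in\mathbb N$ with $F_{n+N}=F_n$ for all $n\in\mathbb{Z}$. Then there exists $L>0$ such that for every sufficiently small $\varepsilon>0$ and every sequence $\mathbf y=(y_n)_{n\in\mathbb{Z}}\subset X$ with $\sup_{n\in\mathbb{Z}}\lVert y_{n+1}-F_n(y_n)\rVert\le L\varepsilon$ and $y_{n+N}=y_n$ for all $n\in\mathbb{Z}$, there exists a sequence $\mathbf x=(x_n)_{n\in\mathbb{Z}}$ with $x_{n+1}=F_n(x_n)$ for all $n\in\mathbb{Z}$, $\sup_{n\in\mathbb{Z}}\lVert x_n-y_n\rVert\le\varepsilon$, and $x_{n+N}=x_n$ for all $n\in\mathbb{Z}$.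
   Context: $l^\infty$ denotes the space of bounded real sequences indexed by $\mathbb{Z}$ with the sup norm; $X_{l^\infty}$ is the space of bounded sequences $(x_n)_{n\in\mathbb{Z}}\subset X$ with norm $\sup_n\lVert x_n\rVert$. Exponential dichotomy: with $\mathcal A(m,n)=A_{m-1}\cdots A_n$ ($m>n$), $\mathrm{Id}$ ($m=n$), $A_m^{-1}\cdots A_{n-1}^{-1}$ ($m<n$), there exist projections $P_m$ with $P_{m+1}A_m=A_mP_m$ and $C,\lambda>0$ with $\lVert\mathcal A(m,n)P_n\rVert\le Ce^{-\lambda(m-n)}$ ($m\ge n$) and $\lVert\mathcal A(m,n)(\mathrm{Id}-P_n)\rVert\le Ce^{-\lambda(n-m)}$ ($m\le n$). The constant $c>0$ is such that there is $K>0$ for which every sequence $(B_m)$ of bounded operators with $\sup_m\lVert A_m-B_m\rVert\le c$ admits an exponential dichotomy and the operator $(\mathbb B\mathbf x)_n=B_{n-1}x_{n-1}$ on $X_{l^\infty}$ has $\mathrm{Id}-\mathbb B$ invertible with $\lVert(\mathrm{Id}-\mathbb B)^{-1}\rVert\le K$. *)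

theory Defs
  imports "HOL-Analysis.Analysis"
begin

primrec fwd :: "(int \<Rightarrow> 'a::real_normed_vector \<Rightarrow>\<^sub>L 'a) \<Rightarrow> int \<Rightarrow> nat \<Rightarrow> 'a \<Rightarrow> 'a" where
  "fwd A n 0 = id"
| "fwd A n (Suc k) = blinfun_apply (A (n + int k)) \<circ> fwd A n k"

primrec bwd :: "(int \<Rightarrow> 'a::real_normed_vector \<Rightarrow>\<^sub>L 'a) \<Rightarrow> int \<Rightarrow> nat \<Rightarrow> 'a \<Rightarrow> 'a" where
  "bwd A n 0 = id"
| "bwd A n (Suc k) = inv (blinfun_apply (A (n - int k - 1))) \<circ> bwd A n k"

definition cocycle :: "(int \<Rightarrow> 'a::real_normed_vector \<Rightarrow>\<^sub>L 'a) \<Rightarrow> int \<Rightarrow> int \<Rightarrow> 'a \<Rightarrow> 'a" where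
  "cocycle A m n = (if n \<le> m then fwd A n (nat (m - n)) else bwd A n (nat (n - m)))"

text \<open>Exponential dichotomy (the definition presupposes that all operators are invertible,
  since the cocycle uses their inverses). Operator-norm bounds are written pointwise.\<close>
definition exp_dichotomy :: "(int \<Rightarrow> 'a::real_normed_vector \<Rightarrow>\<^sub>L 'a) \<Rightarrow> bool" where
  "exp_dichotomy A \<longleftrightarrow>
     (\<forall>m. bij (blinfun_apply (A m))) \<and>
     (\<exists>(P :: int \<Rightarrow> 'a \<Rightarrow>\<^sub>L 'a) C lam. C > 0 \<and> lam > 0 \<and>
        (\<forall>m. P m o\<^sub>L P m = P m) \<and>
        (\<forall>m. P (m + 1) o\<^sub>L A m = A m o\<^sub>L P m) \<and>
        (\<forall>m n x. n \<le> m \<longrightarrow>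
            norm (cocycle A m n (P n x)) \<le> C * exp (- lam * real_of_int (m - n)) * norm x) \<and>
        (\<forall>m n x. m \<le> n \<longrightarrow>
            norm (cocycle A m n (x - P n x)) \<le> C * exp (- lam * real_of_int (n - m)) * norm x))"

text \<open>The property of the constant c from the context (with B = l^infinity):
  there is K > 0 such that every (B_m) with sup_m ||A_m - B_m|| <= c admits an exponential
  dichotomy, and Id - \<BB> (with (\<BB> x)_n = B_(n-1) x_(n-1)) is invertible on the space of bounded
  X-valued sequences with ||(Id - \<BB>)^-1|| <= K.\<close>
definition admissible_const :: "(int \<Rightarrow> 'a::real_normed_vector \<Rightarrow>\<^sub>L 'a) \<Rightarrow> real \<Rightarrow> bool" where
  "admissible_const A c \<longleftrightarrow>
     (\<exists>K > 0. \<forall>B :: int \<Rightarrow> 'a \<Rightarrow>\<^sub>L 'a. (\<forall>m. norm (A m - B m) \<le> c) \<longrightarrow>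
        exp_dichotomy B \<and>
        (\<forall>z :: int \<Rightarrow> 'a. bounded (range z) \<longrightarrow>
            (\<exists>!x :: int \<Rightarrow> 'a. bounded (range x) \<and> (\<forall>n. x n - B (n - 1) (x (n - 1)) = z n))) \<and>
        (\<forall>x :: int \<Rightarrow> 'a. bounded (range x) \<longrightarrow>
            (SUP n. norm (x n)) \<le> K * (SUP n. norm (x n - B (n - 1) (x (n - 1))))))"

end

theory Submission
  imports Defs
begin

(* A true orbit is sought as x = y + z. Then z must solve z_(n+1) = H_n(z_n), and
   H_n = B_n + G_n splits into the linearization B_n = A_n + d f_n(y_n) along the pseudo-orbit y
   and a nonlinear part G_n made of the defect of y and the Taylor remainder of f_n at y_n.
   Since ||B_n - A_n|| <= c, Id - BB is invertible on bounded sequences with inverse of norm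
   at most K, so z is a fixed point of z |-> (Id - BB)^-1 G(z). The Hoelder bound on the
   derivatives makes G Lipschitz with constant D eps^r on the eps-ball, hence for small eps
   and a defect of y below eps/(2K) this map is a contraction of the eps-ball into itself.
   Its unique fixed point is N-periodic, because its N-shift is a fixed point as well. *)

lemma norm_linearization_diff_le:
  fixes g :: "'a::real_normed_vector \<Rightarrow> 'b::real_normed_vector" and g' :: "'a \<Rightarrow> 'a \<Rightarrow>\<^sub>L 'b"
  assumes der: "\<And>x. (g has_derivative blinfun_apply (g' x)) (at x)"
    and hoelder: "\<And>x z. norm (g' x - g' z) \<le> D * norm (x - z) powr r"
    and "0 \<le> D" "0 \<le> r" "norm v \<le> e" "norm w \<le> e"
  shows "norm (g (y + v) - g (y + w) - g' y (v - w)) \<le> D * e powr r * norm (v - w)"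
proof -
  have "norm (g (y + v) - g (y + w) - g' y ((y + v) - (y + w))) \<le> norm ((y + v) - (y + w)) * (D * e powr r)"
  proof (rule differentiable_bound_linearization[where S = "cball y e" and f' = "\<lambda>x. blinfun_apply (g' x)"])
    fix t :: real assume t: "t \<in> {0..1}"
    have "y + w \<in> cball y e" "y + v \<in> cball y e"
      using assms(5,6) by (simp_all add: dist_norm)
    then have "(1 - t) *\<^sub>R (y + w) + t *\<^sub>R (y + v) \<in> cball y e"
      using t by (intro convexD[OF convex_cball]) auto
    moreover have "y + w + t *\<^sub>R ((y + v) - (y + w)) = (1 - t) *\<^sub>R (y + w) + t *\<^sub>R (y + v)"
      by (simp add: algebra_simps)
    ultimately show "y + w + t *\<^sub>R ((y + v) - (y + w)) \<in> cball y e"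
      by simp
  next
    fix x assume "x \<in> cball y e"
    then have "norm (x - y) \<le> e"
      by (simp add: dist_norm norm_minus_commute)
    then have "norm (g' x - g' y) \<le> D * e powr r"
      using hoelder[of x y] assms(3,4) by (meson mult_left_mono norm_ge_zero order_trans powr_mono2)
    then show "onorm (blinfun_apply (g' x) - blinfun_apply (g' y)) \<le> D * e powr r"
      by (simp add: norm_blinfun.rep_eq minus_blinfun.rep_eq fun_diff_def)
  next
    show "y \<in> cball y e"
      using assms(5) norm_ge_zero[of v] by (simp del: norm_ge_zero)
  qed (rule has_derivative_at_withinI[OF der])
  then show ?thesis by (simp add: mult.commute)
qed

lemma complete_UNIV_bcontfun: "complete (UNIV :: ('i::topological_space \<Rightarrow>\<^sub>C 'a::banach) set)"
proof (rule completeI)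
  fix f :: "nat \<Rightarrow> 'i \<Rightarrow>\<^sub>C 'a"
  assume "Cauchy f"
  then have "uniformly_Cauchy_on UNIV f"
    by (intro uniformly_Cauchy_onI) (meson Cauchy_def dist_fun_lt_imp_dist_val_lt)
  then obtain g where "uniform_limit UNIV f g sequentially"
    using Cauchy_uniformly_convergent uniformly_convergent_on_def by blast
  from uniform_limit_bcontfunE[OF this sequentially_bot]
  obtain l where "f \<longlonglongrightarrow> l" by metis
  then show "\<exists>l\<in>UNIV. f \<longlonglongrightarrow> l"
    by blast
qed

lemma Banach_fix_bounded_sequences:
  fixes \<Phi> :: "(int \<Rightarrow> 'a::banach) \<Rightarrow> int \<Rightarrow> 'a"
  assumes "0 \<le> \<epsilon>" "0 \<le> q" "q < 1"
    and maps_into: "\<And>z n. (\<And>k. norm (z k) \<le> \<epsilon>) \<Longrightarrow> norm (\<Phi> z n) \<le> \<epsilon>"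
    and contraction: "\<And>z w b n. (\<And>k. norm (z k) \<le> \<epsilon>) \<Longrightarrow> (\<And>k. norm (w k) \<le> \<epsilon>) \<Longrightarrow>
        (\<And>k. norm (z k - w k) \<le> b) \<Longrightarrow> norm (\<Phi> z n - \<Phi> w n) \<le> q * b"
  shows "\<exists>!z. (\<forall>n. norm (z n) \<le> \<epsilon>) \<and> \<Phi> z = z"
proof -
  define S where "S = cball (0 :: int \<Rightarrow>\<^sub>C 'a) \<epsilon>"
  have S_iff: "z \<in> S \<longleftrightarrow> (\<forall>n. norm (apply_bcontfun z n) \<le> \<epsilon>)" for z
    unfolding S_def using norm_bounded order_trans norm_bound by (simp add: dist_norm) blast
  have in_S: "Bcontfun z \<in> S \<and> apply_bcontfun (Bcontfun z) = z" if "\<And>n. norm (z n) \<le> \<epsilon>" for z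
  proof -
    have "z \<in> bcontfun"
      using that by (intro bcontfun_normI) auto
    then show ?thesis
      using that S_iff by (simp add: Bcontfun_inverse)
  qed
  define T where "T z = Bcontfun (\<Phi> (apply_bcontfun z))" for z
  have T: "T z \<in> S \<and> apply_bcontfun (T z) = \<Phi> (apply_bcontfun z)" if "z \<in> S" for z
    unfolding T_def using that S_iff maps_into by (intro in_S) blast
  have "\<exists>!z\<in>S. T z = z"
  proof (rule Banach_fix)
    show "complete S"
      unfolding S_def by (rule complete_closed_subset[OF closed_cball subset_UNIV complete_UNIV_bcontfun])
    show "S \<noteq> {}"
      using assms(1) by (auto simp: S_def)
    show "T ` S \<subseteq> S"
      using T by blast
    show "dist (T z) (T w) \<le> q * dist z w" if "z \<in> S" "w \<in> S" for z w
    proof (rule dist_bound)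
      fix n
      have "norm (\<Phi> (apply_bcontfun z) n - \<Phi> (apply_bcontfun w) n) \<le> q * dist z w"
        using that S_iff dist_bounded[of z _ w] by (intro contraction) (auto simp: dist_norm)
      then show "dist (apply_bcontfun (T z) n) (apply_bcontfun (T w) n) \<le> q * dist z w"
        using T that by (simp add: dist_norm)
    qed
  qed (use assms(2,3) in auto)
  then obtain z where z: "z \<in> S" "T z = z" and unique: "\<And>z'. z' \<in> S \<Longrightarrow> T z' = z' \<Longrightarrow> z' = z"
    by blast
  show ?thesis
  proof (rule ex1I[of _ "apply_bcontfun z"])
    show "(\<forall>n. norm (apply_bcontfun z n) \<le> \<epsilon>) \<and> \<Phi> (apply_bcontfun z) = apply_bcontfun z"
      using z T[OF z(1)] S_iff by simp
  next
    fix z' assume z': "(\<forall>n. norm (z' n) \<le> \<epsilon>) \<and> \<Phi> z' = z'"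
    then have "T (Bcontfun z') = Bcontfun z'"
      using in_S by (simp add: T_def)
    then have "Bcontfun z' = z"
      using unique in_S z' by blast
    then show "z' = apply_bcontfun z"
      using in_S z' by auto
  qed
qed

lemma norm_le_if_SUP_le:
  fixes x :: "'i \<Rightarrow> 'a::real_normed_vector" and w :: "'i \<Rightarrow> 'b::real_normed_vector"
  assumes "bounded (range x)" "(SUP n. norm (x n)) \<le> K * (SUP n. norm (w n))"
    and "\<And>n. norm (w n) \<le> b" "0 \<le> K"
  shows "norm (x n) \<le> K * b"
proof -
  have "norm (x n) \<le> (SUP n. norm (x n))"
    using assms(1) by (intro cSUP_upper bounded_imp_bdd_above) (auto simp: bounded_norm_comp)
  also have "\<dots> \<le> K * (SUP n. norm (w n))"
    by (fact assms(2))
  also have "\<dots> \<le> K * b"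
    using assms(3,4) by (intro mult_left_mono cSUP_least) auto
  finally show ?thesis .
qed

locale linf_admissible =
  fixes B :: "int \<Rightarrow> 'a::banach \<Rightarrow>\<^sub>L 'a" and K :: real
  assumes K_nonneg: "0 \<le> K"
    and solvable: "\<And>z. bounded (range z) \<Longrightarrow>
      \<exists>!x. bounded (range x) \<and> (\<forall>n. x n - B (n - 1) (x (n - 1)) = z n)"
    and SUP_estimate: "\<And>x. bounded (range x) \<Longrightarrow>
      (SUP n. norm (x n)) \<le> K * (SUP n. norm (x n - B (n - 1) (x (n - 1))))"
begin

definition linf_solution :: "(int \<Rightarrow> 'a) \<Rightarrow> int \<Rightarrow> 'a" where
  "linf_solution z = (THE x. bounded (range x) \<and> (\<forall>n. x n - B (n - 1) (x (n - 1)) = z n))"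

lemma linf_solution:
  assumes "bounded (range z)"
  shows "bounded (range (linf_solution z))"
    and "linf_solution z n - B (n - 1) (linf_solution z (n - 1)) = z n"
  using theI'[OF solvable[OF assms]] unfolding linf_solution_def by auto

lemma linf_solution_unique:
  assumes "bounded (range z)" "bounded (range x)" "\<And>n. x n - B (n - 1) (x (n - 1)) = z n"
  shows "linf_solution z = x"
  unfolding linf_solution_def using solvable[OF assms(1)] assms(2,3) by (intro the1_equality) auto

lemma linf_solution_diff:
  assumes "bounded (range z)" "bounded (range w)"
  shows "linf_solution z n - linf_solution w n = linf_solution (\<lambda>k. z k - w k) n"
proof -
  let ?x = "\<lambda>k. linf_solution z k - linf_solution w k"
  have "?x k - B (k - 1) (?x (k - 1))
      = (linf_solution z k - B (k - 1) (linf_solution z (k - 1)))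
        - (linf_solution w k - B (k - 1) (linf_solution w (k - 1)))" for k
    by (simp add: blinfun.diff_right)
  then have eq: "?x k - B (k - 1) (?x (k - 1)) = z k - w k" for k
    using linf_solution(2) assms by presburger
  have "bounded (range ?x)"
    using linf_solution(1) assms by (intro bounded_minus_comp)
  with eq have "linf_solution (\<lambda>k. z k - w k) = ?x"
    using linf_solution_unique[OF bounded_minus_comp[OF assms]] by blast
  then show ?thesis
    by simp
qed

lemma norm_linf_solution_le:
  assumes "\<And>n. norm (z n) \<le> b"
  shows "norm (linf_solution z n) \<le> K * b"
proof -
  have z: "bounded (range z)"
    using assms by (auto simp: bounded_iff)
  show ?thesis
    using norm_le_if_SUP_le[OF linf_solution(1)[OF z] SUP_estimate[OF linf_solution(1)[OF z]] _ K_nonneg]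
    by (simp add: linf_solution(2)[OF z] assms)
qed

lemma bounded_orbit_ex1:
  fixes H :: "int \<Rightarrow> 'a \<Rightarrow> 'a"
  assumes "0 \<le> \<epsilon>" "0 \<le> \<delta>" "K * \<eta> \<le> \<epsilon>" "K * \<delta> < 1"
    and defect: "\<And>n v. norm v \<le> \<epsilon> \<Longrightarrow> norm (H n v - B n v) \<le> \<eta>"
    and lipschitz: "\<And>n v w. norm v \<le> \<epsilon> \<Longrightarrow> norm w \<le> \<epsilon> \<Longrightarrow>
      norm ((H n v - B n v) - (H n w - B n w)) \<le> \<delta> * norm (v - w)"
  shows "\<exists>!z. (\<forall>n. norm (z n) \<le> \<epsilon>) \<and> (\<forall>n. z (n + 1) = H n (z n))"
proof -
  define G where "G z n = H (n - 1) (z (n - 1)) - B (n - 1) (z (n - 1))" for z n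
  have G_le: "norm (G z n) \<le> \<eta>" if "\<And>k. norm (z k) \<le> \<epsilon>" for z n
    unfolding G_def using defect that by blast
  then have G_bounded: "bounded (range (G z))" if "\<And>k. norm (z k) \<le> \<epsilon>" for z
    using that by (auto simp: bounded_iff)
  have fixpoint_iff: "linf_solution (G z) = z \<longleftrightarrow> (\<forall>n. z (n + 1) = H n (z n))"
    if z: "\<And>k. norm (z k) \<le> \<epsilon>" for z
  proof
    assume fixed: "linf_solution (G z) = z"
    show "\<forall>n. z (n + 1) = H n (z n)"
    proof
      fix n
      have "z (n + 1) - B n (z n) = G z (n + 1)"
        using linf_solution(2)[OF G_bounded[of z, OF z], where n = "n + 1"] by (simp add: fixed)
      then show "z (n + 1) = H n (z n)"
        by (simp add: G_def)
    qed
  next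
    assume orbit: "\<forall>n. z (n + 1) = H n (z n)"
    have "z n - B (n - 1) (z (n - 1)) = G z n" for n
      using orbit[rule_format, of "n - 1"] by (simp add: G_def)
    moreover have "bounded (range z)"
      using z by (auto simp: bounded_iff)
    ultimately show "linf_solution (G z) = z"
      by (intro linf_solution_unique G_bounded z)
  qed
  have "\<exists>!z. (\<forall>n. norm (z n) \<le> \<epsilon>) \<and> linf_solution (G z) = z"
  proof (rule Banach_fix_bounded_sequences)
    show "norm (linf_solution (G z) n) \<le> \<epsilon>" if "\<And>k. norm (z k) \<le> \<epsilon>" for z n
      using norm_linf_solution_le[OF G_le[of z, OF that]] assms(3) by (rule order_trans)
    show "norm (linf_solution (G z) n - linf_solution (G w) n) \<le> K * \<delta> * b"
      if z: "\<And>k. norm (z k) \<le> \<epsilon>" and w: "\<And>k. norm (w k) \<le> \<epsilon>"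
        and zw: "\<And>k. norm (z k - w k) \<le> b" for z w b n
    proof -
      have "norm (G z k - G w k) \<le> \<delta> * b" for k
      proof -
        have "norm (G z k - G w k) \<le> \<delta> * norm (z (k - 1) - w (k - 1))"
          unfolding G_def by (rule lipschitz[OF z w])
        also have "\<dots> \<le> \<delta> * b"
          by (rule mult_left_mono[OF zw assms(2)])
        finally show ?thesis .
      qed
      then show ?thesis
        using norm_linf_solution_le linf_solution_diff[OF G_bounded[of z, OF z] G_bounded[of w, OF w]]
        by (simp add: mult.assoc)
    qed
  qed (use assms(1-4) K_nonneg in auto)
  then obtain z where z: "\<forall>n. norm (z n) \<le> \<epsilon>" "linf_solution (G z) = z"
    and unique: "\<And>z'. (\<forall>n. norm (z' n) \<le> \<epsilon>) \<Longrightarrow> linf_solution (G z') = z' \<Longrightarrow> z' = z"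
    by blast
  show ?thesis
    using z fixpoint_iff unique by (intro ex1I[of _ z]) blast+
qed

lemma periodic_bounded_orbit_exists:
  fixes H :: "int \<Rightarrow> 'a \<Rightarrow> 'a"
  assumes "0 \<le> \<epsilon>" "0 \<le> \<delta>" "K * \<eta> \<le> \<epsilon>" "K * \<delta> < 1"
    and defect: "\<And>n v. norm v \<le> \<epsilon> \<Longrightarrow> norm (H n v - B n v) \<le> \<eta>"
    and lipschitz: "\<And>n v w. norm v \<le> \<epsilon> \<Longrightarrow> norm w \<le> \<epsilon> \<Longrightarrow>
      norm ((H n v - B n v) - (H n w - B n w)) \<le> \<delta> * norm (v - w)"
    and periodic: "\<And>n. H (n + p) = H n"
  shows "\<exists>z. (\<forall>n. norm (z n) \<le> \<epsilon>) \<and> (\<forall>n. z (n + 1) = H n (z n)) \<and> (\<forall>n. z (n + p) = z n)"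
proof -
  obtain z where z: "\<forall>n. norm (z n) \<le> \<epsilon>" "\<forall>n. z (n + 1) = H n (z n)"
    and unique: "\<And>z'. (\<forall>n. norm (z' n) \<le> \<epsilon>) \<Longrightarrow> (\<forall>n. z' (n + 1) = H n (z' n)) \<Longrightarrow> z' = z"
    using bounded_orbit_ex1[OF assms(1-4) defect lipschitz] by blast
  have "(\<lambda>n. z (n + p)) = z"
  proof (rule unique)
    show "\<forall>n. z (n + 1 + p) = H n (z (n + p))"
    proof
      fix n
      have "z (n + 1 + p) = z (n + p + 1)"
        by (simp add: algebra_simps)
      also have "\<dots> = H (n + p) (z (n + p))"
        using z(2) by blast
      finally show "z (n + 1 + p) = H n (z (n + p))"
        by (simp add: periodic)
    qed
  qed (use z(1) in auto)
  then have "\<forall>n. z (n + p) = z n"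
    by (metis fun_cong)
  with z show ?thesis
    by blast
qed

end

lemma admissible_constE:
  assumes "admissible_const A c"
  obtains K where "0 < K" "\<And>B. (\<forall>m. norm (A m - B m) \<le> c) \<Longrightarrow> linf_admissible B K"
proof -
  from assms obtain K where "0 < K" and adm: "\<And>B. (\<forall>m. norm (A m - B m) \<le> c) \<Longrightarrow>
      exp_dichotomy B \<and>
      (\<forall>z. bounded (range z) \<longrightarrow>
         (\<exists>!x. bounded (range x) \<and> (\<forall>n. x n - B (n - 1) (x (n - 1)) = z n))) \<and>
      (\<forall>x. bounded (range x) \<longrightarrow>
         (SUP n. norm (x n)) \<le> K * (SUP n. norm (x n - B (n - 1) (x (n - 1)))))"
    unfolding admissible_const_def by blast
  then have "linf_admissible B K" if "\<forall>m. norm (A m - B m) \<le> c" for B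
    using adm[OF that] by unfold_locales auto
  with \<open>0 < K\<close> show ?thesis
    using that by blast
qed

lemma periodic_shadowing:
  fixes A :: "int \<Rightarrow> 'a::banach \<Rightarrow>\<^sub>L 'a" and f :: "int \<Rightarrow> 'a \<Rightarrow> 'a"
    and f' :: "int \<Rightarrow> 'a \<Rightarrow> 'a \<Rightarrow>\<^sub>L 'a" and y :: "int \<Rightarrow> 'a"
  assumes K: "0 < K" and admissible: "linf_admissible (\<lambda>n. A n + f' n (y n)) K"
    and f_deriv: "\<And>n x. (f n has_derivative blinfun_apply (f' n x)) (at x)"
    and hoelder: "\<And>n x z. norm (f' n x - f' n z) \<le> D * norm (x - z) powr r"
    and D: "0 \<le> D" and r: "0 \<le> r"
    and periodic: "\<And>n x. A (n + p) x + f (n + p) x = A n x + f n x"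
    and \<epsilon>: "0 \<le> \<epsilon>" "2 * K * (D * \<epsilon> powr r) \<le> 1"
    and y_defect: "\<And>n. norm (y (n + 1) - (A n (y n) + f n (y n))) \<le> \<epsilon> / (2 * K)"
    and y_periodic: "\<And>n. y (n + p) = y n"
  shows "\<exists>x. (\<forall>n. x (n + 1) = A n (x n) + f n (x n)) \<and> (\<forall>n. norm (x n - y n) \<le> \<epsilon>)
           \<and> (\<forall>n. x (n + p) = x n)"
proof -
  define B where "B n = A n + f' n (y n)" for n
  define H where "H n v = A n (y n + v) + f n (y n + v) - y (n + 1)" for n v
  define \<delta> where "\<delta> = D * \<epsilon> powr r"
  interpret linf_admissible B K
    using admissible by (simp add: B_def[abs_def])
  have HB: "H n v - B n v
      = (A n (y n) + f n (y n) - y (n + 1)) + (f n (y n + v) - f n (y n) - f' n (y n) v)" for n v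
    by (simp add: H_def B_def blinfun.add_left blinfun.add_right algebra_simps)
  have remainder: "norm (f n (y n + v) - f n (y n + w) - f' n (y n) (v - w)) \<le> \<delta> * norm (v - w)"
    if "norm v \<le> \<epsilon>" "norm w \<le> \<epsilon>" for n v w
    unfolding \<delta>_def using that by (intro norm_linearization_diff_le f_deriv hoelder D r)
  have "\<exists>z. (\<forall>n. norm (z n) \<le> \<epsilon>) \<and> (\<forall>n. z (n + 1) = H n (z n)) \<and> (\<forall>n. z (n + p) = z n)"
  proof (rule periodic_bounded_orbit_exists)
    show "norm (H n v - B n v) \<le> \<epsilon> / (2 * K) + \<delta> * \<epsilon>" if "norm v \<le> \<epsilon>" for n v
    proof -
      have "norm (H n v - B n v) \<le> norm (A n (y n) + f n (y n) - y (n + 1))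
          + norm (f n (y n + v) - f n (y n) - f' n (y n) v)"
        unfolding HB by (rule norm_triangle_ineq)
      also have "\<dots> \<le> \<epsilon> / (2 * K) + \<delta> * norm v"
        using y_defect[of n] remainder[of v 0 n] that \<epsilon>(1)
        by (intro add_mono) (simp_all add: norm_minus_commute)
      also have "\<dots> \<le> \<epsilon> / (2 * K) + \<delta> * \<epsilon>"
        using that D by (simp add: \<delta>_def mult_left_mono)
      finally show ?thesis .
    qed
    show "norm ((H n v - B n v) - (H n w - B n w)) \<le> \<delta> * norm (v - w)"
      if "norm v \<le> \<epsilon>" "norm w \<le> \<epsilon>" for n v w
      using remainder[OF that, of n] by (simp add: HB blinfun.diff_right algebra_simps)
    show "K * (\<epsilon> / (2 * K) + \<delta> * \<epsilon>) \<le> \<epsilon>"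
      using K \<epsilon> mult_right_mono[OF \<epsilon>(2) \<epsilon>(1)] by (simp add: \<delta>_def field_simps)
    show "H (n + p) = H n" for n
    proof -
      have "y (n + p + 1) = y (n + 1)"
        using y_periodic[of "n + 1"] by (simp add: ac_simps)
      then show ?thesis
        using periodic by (simp add: H_def y_periodic fun_eq_iff)
    qed
  qed (use \<epsilon> K D in \<open>auto simp: \<delta>_def\<close>)
  then obtain z where "\<forall>n. norm (z n) \<le> \<epsilon>" "\<forall>n. z (n + 1) = H n (z n)" "\<forall>n. z (n + p) = z n"
    by blast
  then show ?thesis
    by (intro exI[of _ "\<lambda>n. y n + z n"]) (auto simp: H_def y_periodic)
qed

theorem corollary3p6:
  fixes A :: "int \<Rightarrow> 'a::banach \<Rightarrow>\<^sub>L 'a"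
    and f :: "int \<Rightarrow> 'a \<Rightarrow> 'a"
    and f' :: "int \<Rightarrow> 'a \<Rightarrow> 'a \<Rightarrow>\<^sub>L 'a"
    and c D r :: real and N :: nat
  assumes inv: "\<forall>m. bij (blinfun_apply (A m))"
    and A_bdd: "bounded (range A)"
    and dich: "exp_dichotomy A"
    and c_pos: "c > 0"
    and c_adm: "admissible_const A c"
    and f_deriv: "\<forall>n x. (f n has_derivative blinfun_apply (f' n x)) (at x)"
    and f'_bdd: "\<forall>n x. norm (f' n x) \<le> c"
    and f_bdd: "\<exists>M. \<forall>n x. norm (f n x) \<le> M"
    and D_pos: "D > 0" and r_pos: "r > 0"
    and hoelder: "\<forall>n x y. norm (f' n x - f' n y) \<le> D * norm (x - y) powr r"
    and N_pos: "N > 0"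
    and periodic: "\<forall>n x. A (n + int N) x + f (n + int N) x = A n x + f n x"
  shows "\<exists>L > 0. \<exists>\<epsilon>0 > 0. \<forall>\<epsilon>. 0 < \<epsilon> \<and> \<epsilon> \<le> \<epsilon>0 \<longrightarrow>
           (\<forall>y :: int \<Rightarrow> 'a.
              (\<forall>n. norm (y (n + 1) - (A n (y n) + f n (y n))) \<le> L * \<epsilon>) \<and>
              (\<forall>n. y (n + int N) = y n) \<longrightarrow>
              (\<exists>x :: int \<Rightarrow> 'a. (\<forall>n. x (n + 1) = A n (x n) + f n (x n)) \<and>
                  (\<forall>n. norm (x n - y n) \<le> \<epsilon>) \<and>
                  (\<forall>n. x (n + int N) = x n)))"
proof -
  obtain K where K: "0 < K" and admissible: "\<And>B. (\<forall>m. norm (A m - B m) \<le> c) \<Longrightarrow> linf_admissible B K"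
    using admissible_constE[OF c_adm] by blast
  define \<epsilon>0 where "\<epsilon>0 = (1 / (2 * K * D)) powr (1 / r)"
  show ?thesis
  proof (rule exI[of _ "1 / (2 * K)"], intro conjI exI[of _ \<epsilon>0] allI impI)
    show "0 < 1 / (2 * K)" "0 < \<epsilon>0"
      using K D_pos by (simp_all add: \<epsilon>0_def)
    fix \<epsilon> :: real and y :: "int \<Rightarrow> 'a"
    assume \<epsilon>: "0 < \<epsilon> \<and> \<epsilon> \<le> \<epsilon>0"
      and y: "(\<forall>n. norm (y (n + 1) - (A n (y n) + f n (y n))) \<le> 1 / (2 * K) * \<epsilon>) \<and> (\<forall>n. y (n + int N) = y n)"
    have "\<epsilon> powr r \<le> \<epsilon>0 powr r"
      using \<epsilon> r_pos by (intro powr_mono2) auto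
    also have "\<dots> = 1 / (2 * K * D)"
      using K D_pos r_pos by (simp add: \<epsilon>0_def powr_powr)
    finally have "2 * K * (D * \<epsilon> powr r) \<le> 1"
      using K D_pos by (simp add: field_simps)
    moreover have "linf_admissible (\<lambda>n. A n + f' n (y n)) K"
      using f'_bdd by (intro admissible) simp
    ultimately show "\<exists>x. (\<forall>n. x (n + 1) = A n (x n) + f n (x n)) \<and> (\<forall>n. norm (x n - y n) \<le> \<epsilon>)
        \<and> (\<forall>n. x (n + int N) = x n)"
      using \<epsilon> y D_pos r_pos f_deriv hoelder periodic
      by (intro periodic_shadowing[OF K]) auto
  qed
qed

end
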